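(* Let $(\omega,c)\in\mathbb{R}^2$ satisfy: $\omega>c^2/4$, or $\omega=c^2/4$ and $c>0$. Then the function $(\alpha_0,\alpha_1)\ni\eta_3\mapsto T_\psi(\eta_3)\in(0,\infty)$ is strictly increasing, where $$T_\psi(\eta_3)=\frac{8}{\sqrt{\eta_3\sqrt{A(\eta_3)}}}\,K(k(\eta_3)).$$
   Context: $\alpha_0=\tfrac13(4c+\sqrt{48\omega+4c^2})$, $\alpha_1=4\sqrt\omega+2c$, $A(x)=-3x^2+8cx+64\omega$ (positive on $(\alpha_0,\alpha_1)$). For $\eta_3\in(\alpha_0,\alpha_1)$: $\eta_1=\frac{-\eta_3+4c-\sqrt{A(\eta_3)}}{2}$, $\eta_2=\frac{-\eta_3+4c+\sqrt{A(\eta_3)}}{2}$ (so $\eta_3(\eta_2-\eta_1)=\eta_3\sqrt{A(\eta_3)}$), and $k(\eta_3)^2=\frac{-\eta_1(\eta_3-\eta_2)}{\eta_3(\eta_2-\eta_1)}\in(0,1)$. $K(k)=\int_0^{\pi/2}(1-k^2\sin^2\theta)^{-1/2}d\theta$ is the complete elliptic integral of the first kind. $T_\psi$ is the fundamental period of the periodic solution $\psi=\Phi^2$ with maximum $\eta_3$. *)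

theory Defs
  imports "HOL-Analysis.Analysis"
begin

definition alpha0 :: "real \<Rightarrow> real \<Rightarrow> real" where
  "alpha0 \<omega> c = (4 * c + sqrt (48 * \<omega> + 4 * c\<^sup>2)) / 3"

definition alpha1 :: "real \<Rightarrow> real \<Rightarrow> real" where
  "alpha1 \<omega> c = 4 * sqrt \<omega> + 2 * c"

definition Apoly :: "real \<Rightarrow> real \<Rightarrow> real \<Rightarrow> real" where
  "Apoly \<omega> c x = - 3 * x\<^sup>2 + 8 * c * x + 64 * \<omega>"

definition eta1 :: "real \<Rightarrow> real \<Rightarrow> real \<Rightarrow> real" where
  "eta1 \<omega> c \<eta>3 = (- \<eta>3 + 4 * c - sqrt (Apoly \<omega> c \<eta>3)) / 2"

definition eta2 :: "real \<Rightarrow> real \<Rightarrow> real \<Rightarrow> real" where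
  "eta2 \<omega> c \<eta>3 = (- \<eta>3 + 4 * c + sqrt (Apoly \<omega> c \<eta>3)) / 2"

definition ksq :: "real \<Rightarrow> real \<Rightarrow> real \<Rightarrow> real" where
  "ksq \<omega> c \<eta>3 = (- eta1 \<omega> c \<eta>3 * (\<eta>3 - eta2 \<omega> c \<eta>3))
                   / (\<eta>3 * (eta2 \<omega> c \<eta>3 - eta1 \<omega> c \<eta>3))"

definition ellipK :: "real \<Rightarrow> real" where
  "ellipK k = integral {0..pi/2} (\<lambda>\<theta>. 1 / sqrt (1 - k\<^sup>2 * (sin \<theta>)\<^sup>2))"

definition T_psi :: "real \<Rightarrow> real \<Rightarrow> real \<Rightarrow> real" where
  "T_psi \<omega> c \<eta>3 = 8 / sqrt (\<eta>3 * sqrt (Apoly \<omega> c \<eta>3)) * ellipK (sqrt (ksq \<omega> c \<eta>3))"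

end

theory Submission
  imports Defs
begin

text \<open>With \<open>a\<^sup>2 = \<eta>3 \<surd>A(\<eta>3)\<close> and \<open>b\<^sup>2 = (\<eta>3 - \<eta>1) \<eta>2\<close> one has \<open>k\<^sup>2 = 1 - b\<^sup>2/a\<^sup>2\<close>, so
  \<open>T\<^sub>\<psi>\<close> is \<open>8\<close> times the integral of \<open>1 / \<surd>(a\<^sup>2 cos\<^sup>2 \<theta> + b\<^sup>2 sin\<^sup>2 \<theta>)\<close> over \<open>[0, \<pi>/2]\<close>.
  Gauss's transformation leaves this integral unchanged when \<open>(a, b)\<close> is replaced by
  \<open>((a + b)/2, \<surd>(a b))\<close>, and the integral is strictly decreasing in both arguments. It
  therefore suffices that \<open>a + b\<close> and \<open>a b\<close> strictly decrease in \<open>\<eta>3\<close>. In the coordinates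
  \<open>p = \<eta>2\<close>, \<open>v = -\<eta>1\<close>, \<open>x = \<eta>3 - \<eta>2\<close>, which are positive on \<open>(\<alpha>0, \<alpha>1)\<close>, the signs of
  both derivatives reduce to polynomial inequalities with positive coefficients.\<close>

lemma strict_antimono_on_if_DERIV_neg:
  fixes f :: "real \<Rightarrow> real"
  assumes "\<And>x. x \<in> {a<..<b} \<Longrightarrow> \<exists>y. DERIV f x :> y \<and> y < 0"
  shows "strict_antimono_on {a<..<b} f"
proof (rule monotone_onI)
  fix x y assume "x \<in> {a<..<b}" "y \<in> {a<..<b}" "x < y"
  then show "f y < f x" using assms by (intro DERIV_neg_imp_decreasing[of x y f]) auto
qed

section \<open>Gauss's transformation\<close>

definition gauss_integrand :: "real \<Rightarrow> real \<Rightarrow> real \<Rightarrow> real" where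
  "gauss_integrand a b t = 1 / sqrt (a\<^sup>2 * (cos t)\<^sup>2 + b\<^sup>2 * (sin t)\<^sup>2)"

definition gauss_integral :: "real \<Rightarrow> real \<Rightarrow> real" where
  "gauss_integral a b = integral {0..pi/2} (gauss_integrand a b)"

lemma gauss_quadratic_form_pos:
  fixes a b t :: real
  assumes "a \<noteq> 0" "b \<noteq> 0"
  shows "a\<^sup>2 * (cos t)\<^sup>2 + b\<^sup>2 * (sin t)\<^sup>2 > 0"
proof (cases "sin t = 0")
  case True
  then have "(cos t)\<^sup>2 = 1" using sin_cos_squared_add[of t] by simp
  then show ?thesis using assms True by simp
next
  case False
  then have "b\<^sup>2 * (sin t)\<^sup>2 > 0" using assms by simp
  then show ?thesis by (simp add: add_nonneg_pos)
qed

lemma gauss_integrand_pos: "a \<noteq> 0 \<Longrightarrow> b \<noteq> 0 \<Longrightarrow> gauss_integrand a b t > 0"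
  unfolding gauss_integrand_def using gauss_quadratic_form_pos by simp

lemma continuous_on_gauss_integrand:
  "a \<noteq> 0 \<Longrightarrow> b \<noteq> 0 \<Longrightarrow> continuous_on S (gauss_integrand a b)"
  unfolding gauss_integrand_def[abs_def]
  by (intro continuous_intros) (use gauss_quadratic_form_pos in \<open>auto simp: less_imp_neq[symmetric]\<close>)

lemma gauss_integral_pos:
  assumes "a \<noteq> 0" "b \<noteq> 0"
  shows "gauss_integral a b > 0"
proof -
  have "integral {0..pi/2} (\<lambda>t. 0) < integral {0..pi/2} (gauss_integrand a b)"
    by (rule integral_less_real)
      (use assms in \<open>auto intro: continuous_on_gauss_integrand gauss_integrand_pos simp: not_le\<close>)
  then show ?thesis unfolding gauss_integral_def by simp
qed

lemma gauss_integral_strict_antimono: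
  assumes "0 < a'" "a' < a" "0 < b'" "b' < b"
  shows "gauss_integral a b < gauss_integral a' b'"
  unfolding gauss_integral_def
proof (rule integral_less_real)
  show "continuous_on {0..pi/2} (gauss_integrand a b)"
    and "continuous_on {0..pi/2} (gauss_integrand a' b')"
    using assms by (auto intro: continuous_on_gauss_integrand)
  show "{0<..<pi/2} \<noteq> {}" by (simp add: not_le)
  fix t assume t: "t \<in> {0<..<pi/2}"
  have "cos t > 0" "sin t > 0" using t by (auto intro: cos_gt_zero sin_gt_zero)
  moreover have "a'\<^sup>2 < a\<^sup>2" "b'\<^sup>2 < b\<^sup>2" using assms by (auto intro: power_strict_mono)
  ultimately have "a'\<^sup>2 * (cos t)\<^sup>2 + b'\<^sup>2 * (sin t)\<^sup>2 < a\<^sup>2 * (cos t)\<^sup>2 + b\<^sup>2 * (sin t)\<^sup>2"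
    by (intro add_strict_mono mult_strict_right_mono) auto
  moreover have "0 < a'\<^sup>2 * (cos t)\<^sup>2 + b'\<^sup>2 * (sin t)\<^sup>2"
    using assms by (intro gauss_quadratic_form_pos) auto
  ultimately show "gauss_integrand a b t < gauss_integrand a' b' t"
    unfolding gauss_integrand_def by (intro divide_strict_left_mono real_sqrt_less_mono) auto
qed

text \<open>Gauss's substitution \<open>\<phi> \<mapsto> t\<close>, with \<open>cos t\<close> and \<open>sin t\<close> as below, has derivative
  \<open>1 + a b / D\<close>. It is realised as \<open>\<phi> + arctan (b/a tan \<phi>)\<close> on \<open>[0, \<pi>/4]\<close> and as
  \<open>\<phi> + \<pi>/2 - arctan (a/b cot \<phi>)\<close> on \<open>[\<pi>/4, \<pi>/2]\<close>; together these map \<open>[0, \<pi>/2]\<close> onto \<open>[0, \<pi>]\<close>.\<close>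

lemma gauss_transformation_pointwise:
  fixes a b \<phi> t :: real
  defines "D \<equiv> a\<^sup>2 * (cos \<phi>)\<^sup>2 + b\<^sup>2 * (sin \<phi>)\<^sup>2"
  assumes a: "a > 0" and b: "b > 0"
    and cos_t: "cos t = (a * (cos \<phi>)\<^sup>2 - b * (sin \<phi>)\<^sup>2) / sqrt D"
    and sin_t: "sin t = (a + b) * sin \<phi> * cos \<phi> / sqrt D"
  shows "(1 + a * b / D) * gauss_integrand ((a + b) / 2) (sqrt (a * b)) t = 2 * gauss_integrand a b \<phi>"
proof -
  define c s where "c = cos \<phi>" and "s = sin \<phi>"
  have D_pos: "D > 0" unfolding D_def using a b by (intro gauss_quadratic_form_pos) auto
  have D_ab: "D + a * b = (a + b) * (a * c\<^sup>2 + b * s\<^sup>2)"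
  proof -
    have "s\<^sup>2 + c\<^sup>2 = 1" unfolding c_def s_def by simp
    then have "D + a * b = a\<^sup>2 * c\<^sup>2 + b\<^sup>2 * s\<^sup>2 + a * b * (s\<^sup>2 + c\<^sup>2)" unfolding D_def c_def s_def by simp
    then show ?thesis by (simp add: algebra_simps power2_eq_square)
  qed
  have sqrt_D: "(sqrt D)\<^sup>2 = D" using D_pos by simp
  have "((a + b) / 2)\<^sup>2 * (cos t)\<^sup>2 + (sqrt (a * b))\<^sup>2 * (sin t)\<^sup>2
      = ((a + b)\<^sup>2 / 4 * (a * c\<^sup>2 - b * s\<^sup>2)\<^sup>2 + a * b * ((a + b) * s * c)\<^sup>2) / D"
    using D_pos a b unfolding cos_t sin_t c_def[symmetric] s_def[symmetric]
    by (simp add: power_divide sqrt_D field_simps)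
  also have "\<dots> = ((D + a * b) / (2 * sqrt D))\<^sup>2"
    unfolding D_ab using D_pos by (simp add: power_divide sqrt_D field_simps power2_eq_square)
  finally have "gauss_integrand ((a + b) / 2) (sqrt (a * b)) t = 2 * sqrt D / (D + a * b)"
    unfolding gauss_integrand_def using D_pos a b by (simp add: add_pos_pos)
  moreover have "D + a * b > 0" using D_pos a b by (simp add: add_pos_pos)
  ultimately have "(1 + a * b / D) * gauss_integrand ((a + b) / 2) (sqrt (a * b)) t = 2 * sqrt D / D"
    using D_pos by (simp add: field_simps)
  also have "\<dots> = 2 / sqrt D"
    using D_pos by (simp add: divide_simps mult.assoc)
  finally show ?thesis unfolding gauss_integrand_def D_def by simp
qed

lemma cos_sin_arctan_scaled_tan:
  fixes a b x :: real
  defines "D \<equiv> a\<^sup>2 * (cos x)\<^sup>2 + b\<^sup>2 * (sin x)\<^sup>2"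
  assumes a: "a > 0" and b: "b > 0" and cos_x: "cos x > 0"
  shows "cos (arctan (b / a * tan x)) = a * cos x / sqrt D"
    and "sin (arctan (b / a * tan x)) = b * sin x / sqrt D"
proof -
  have D_pos: "D > 0" unfolding D_def using a cos_x by (simp add: add_pos_nonneg)
  have E: "sqrt (1 + (b / a * tan x)\<^sup>2) = sqrt D / (a * cos x)"
    by (rule real_sqrt_unique) (use D_pos a cos_x in \<open>simp_all add: power_divide D_def tan_def field_simps\<close>)
  then show "cos (arctan (b / a * tan x)) = a * cos x / sqrt D"
        and "sin (arctan (b / a * tan x)) = b * sin x / sqrt D"
    unfolding cos_arctan sin_arctan E using a cos_x D_pos by (simp_all add: tan_def field_simps)
qed

lemma cos_sin_arctan_scaled_cot:
  fixes a b x :: real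
  defines "D \<equiv> a\<^sup>2 * (cos x)\<^sup>2 + b\<^sup>2 * (sin x)\<^sup>2"
  assumes a: "a > 0" and b: "b > 0" and sin_x: "sin x > 0"
  shows "cos (arctan (a / b * (cos x / sin x))) = b * sin x / sqrt D"
    and "sin (arctan (a / b * (cos x / sin x))) = a * cos x / sqrt D"
proof -
  have D_pos: "D > 0" unfolding D_def using b sin_x by (simp add: add_nonneg_pos)
  have E: "sqrt (1 + (a / b * (cos x / sin x))\<^sup>2) = sqrt D / (b * sin x)"
    by (rule real_sqrt_unique) (use D_pos b sin_x in \<open>simp_all add: power_divide D_def field_simps\<close>)
  then show "cos (arctan (a / b * (cos x / sin x))) = b * sin x / sqrt D"
        and "sin (arctan (a / b * (cos x / sin x))) = a * cos x / sqrt D"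
    unfolding cos_arctan sin_arctan E using b sin_x D_pos by (simp_all add: field_simps)
qed

lemma has_real_derivative_arctan_scaled_tan:
  fixes a b x :: real
  assumes a: "a > 0" and b: "b > 0" and cos_x: "cos x > 0"
  shows "((\<lambda>x. x + arctan (b / a * tan x)) has_real_derivative
          1 + a * b / (a\<^sup>2 * (cos x)\<^sup>2 + b\<^sup>2 * (sin x)\<^sup>2)) (at x)"
proof -
  have D_pos: "a\<^sup>2 * (cos x)\<^sup>2 + b\<^sup>2 * (sin x)\<^sup>2 > 0" using a cos_x by (simp add: add_pos_nonneg)
  have "1 + (b / a * tan x)\<^sup>2 = (a\<^sup>2 * (cos x)\<^sup>2 + b\<^sup>2 * (sin x)\<^sup>2) / (a * cos x)\<^sup>2"
    using a cos_x by (simp add: tan_def power_divide field_simps)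
  then have inv: "inverse (1 + (b / a * tan x)\<^sup>2) = (a * cos x)\<^sup>2 / (a\<^sup>2 * (cos x)\<^sup>2 + b\<^sup>2 * (sin x)\<^sup>2)"
    by simp
  have deriv_eq: "1 + inverse (1 + (b / a * tan x)\<^sup>2) * (b / a * inverse ((cos x)\<^sup>2))
      = 1 + a * b / (a\<^sup>2 * (cos x)\<^sup>2 + b\<^sup>2 * (sin x)\<^sup>2)"
    unfolding inv using a cos_x D_pos by (simp add: field_simps power2_eq_square)
  have deriv: "((\<lambda>x. x + arctan (b / a * tan x)) has_real_derivative
      1 + inverse (1 + (b / a * tan x)\<^sup>2) * (b / a * inverse ((cos x)\<^sup>2))) (at x)"
    by (rule derivative_intros DERIV_cmult DERIV_tan | use cos_x in simp)+
  show ?thesis using deriv unfolding deriv_eq .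
qed

lemma has_real_derivative_arctan_scaled_cot:
  fixes a b x :: real
  assumes a: "a > 0" and b: "b > 0" and sin_x: "sin x > 0"
  shows "((\<lambda>x. x + pi / 2 - arctan (a / b * (cos x / sin x))) has_real_derivative
          1 + a * b / (a\<^sup>2 * (cos x)\<^sup>2 + b\<^sup>2 * (sin x)\<^sup>2)) (at x)"
proof -
  have D_pos: "a\<^sup>2 * (cos x)\<^sup>2 + b\<^sup>2 * (sin x)\<^sup>2 > 0" using b sin_x by (simp add: add_nonneg_pos)
  have "1 + (a / b * (cos x / sin x))\<^sup>2 = (a\<^sup>2 * (cos x)\<^sup>2 + b\<^sup>2 * (sin x)\<^sup>2) / (b * sin x)\<^sup>2"
    using b sin_x by (simp add: power_divide field_simps)
  then have inv: "inverse (1 + (a / b * (cos x / sin x))\<^sup>2)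
      = (b * sin x)\<^sup>2 / (a\<^sup>2 * (cos x)\<^sup>2 + b\<^sup>2 * (sin x)\<^sup>2)"
    by simp
  have pythagoras: "- sin x * sin x - cos x * cos x = -1" by (simp add: algebra_simps)
  have deriv_eq: "(1 + 0) - inverse (1 + (a / b * (cos x / sin x))\<^sup>2)
        * (a / b * ((- sin x * sin x - cos x * cos x) / (sin x * sin x)))
      = 1 + a * b / (a\<^sup>2 * (cos x)\<^sup>2 + b\<^sup>2 * (sin x)\<^sup>2)"
    unfolding inv pythagoras using b sin_x D_pos by (simp add: field_simps power2_eq_square)
  have deriv: "((\<lambda>x. x + pi / 2 - arctan (a / b * (cos x / sin x))) has_real_derivative
      (1 + 0) - inverse (1 + (a / b * (cos x / sin x))\<^sup>2)
        * (a / b * ((- sin x * sin x - cos x * cos x) / (sin x * sin x)))) (at x)"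
    by (rule derivative_intros DERIV_cmult DERIV_divide DERIV_sin DERIV_cos | use sin_x in simp)+
  show ?thesis using deriv unfolding deriv_eq .
qed

lemma gauss_substitution_tan_part:
  fixes a b :: real
  assumes a: "a > 0" and b: "b > 0"
  shows "((\<lambda>\<phi>. 2 * gauss_integrand a b \<phi>) has_integral
           integral {0..pi/4 + arctan (b/a)} (gauss_integrand ((a + b) / 2) (sqrt (a * b)))) {0..pi/4}"
proof -
  define F where "F = gauss_integrand ((a + b) / 2) (sqrt (a * b))"
  define D where "D \<phi> = a\<^sup>2 * (cos \<phi>)\<^sup>2 + b\<^sup>2 * (sin \<phi>)\<^sup>2" for \<phi>
  define g where "g \<phi> = \<phi> + arctan (b / a * tan \<phi>)" for \<phi>
  have g_ends: "g 0 = 0" "g (pi/4) = pi/4 + arctan (b/a)" unfolding g_def by (simp_all add: tan_45)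
  have cos_pos: "cos \<phi> > 0" if "\<phi> \<in> {0..pi/4}" for \<phi>
    using that pi_gt_zero by (intro cos_gt_zero_pi) (auto simp del: pi_gt_zero)
  have "g ` {0..pi/4} \<subseteq> {0..pi}"
  proof
    fix y assume "y \<in> g ` {0..pi/4}"
    then obtain \<phi> where \<phi>: "\<phi> \<in> {0..pi/4}" "y = g \<phi>" by auto
    have "0 \<le> tan \<phi>" using \<phi>(1) pi_gt_zero by (intro tan_pos_pi2_le) (auto simp del: pi_gt_zero)
    then have "0 \<le> arctan (b / a * tan \<phi>)" using a b by simp
    then show "y \<in> {0..pi}" using \<phi> arctan_ubound[of "b / a * tan \<phi>"] unfolding g_def by auto
  qed
  then have "((\<lambda>\<phi>. (1 + a * b / D \<phi>) *\<^sub>R F (g \<phi>)) has_integral integral {g 0..g (pi/4)} F) {0..pi/4}"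
  proof (rule has_integral_substitution[where c = 0 and d = pi, rotated 2])
    show "g 0 \<le> g (pi/4)" unfolding g_ends using a b by simp
    show "continuous_on {0..pi} F" unfolding F_def using a b by (intro continuous_on_gauss_integrand) auto
    fix \<phi> assume "\<phi> \<in> {0..pi/4}"
    then show "(g has_real_derivative 1 + a * b / D \<phi>) (at \<phi> within {0..pi/4})"
      unfolding g_def[abs_def] D_def
      using has_real_derivative_arctan_scaled_tan[OF a b cos_pos] has_field_derivative_at_within by blast
  qed simp
  moreover have "(1 + a * b / D \<phi>) *\<^sub>R F (g \<phi>) = 2 * gauss_integrand a b \<phi>" if "\<phi> \<in> {0..pi/4}" for \<phi>
  proof -
    note cs = cos_sin_arctan_scaled_tan[OF a b cos_pos[OF that], folded D_def]
    have "sqrt (D \<phi>) > 0" unfolding D_def using a b by (simp add: gauss_quadratic_form_pos)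
    then show ?thesis unfolding F_def D_def real_scaleR_def
      by (intro gauss_transformation_pointwise[OF a b], fold D_def)
        (unfold g_def cos_add sin_add cs, simp_all add: field_simps power2_eq_square)
  qed
  ultimately show ?thesis unfolding g_ends F_def by (subst (asm) has_integral_cong) auto
qed

lemma gauss_substitution_cot_part:
  fixes a b :: real
  assumes a: "a > 0" and b: "b > 0"
  shows "((\<lambda>\<phi>. 2 * gauss_integrand a b \<phi>) has_integral
           integral {pi/4 + arctan (b/a)..pi} (gauss_integrand ((a + b) / 2) (sqrt (a * b)))) {pi/4..pi/2}"
proof -
  define F where "F = gauss_integrand ((a + b) / 2) (sqrt (a * b))"
  define D where "D \<phi> = a\<^sup>2 * (cos \<phi>)\<^sup>2 + b\<^sup>2 * (sin \<phi>)\<^sup>2" for \<phi>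
  define g where "g \<phi> = \<phi> + pi / 2 - arctan (a / b * (cos \<phi> / sin \<phi>))" for \<phi>
  have "arctan (b/a) = pi/2 - arctan (a/b)" using arctan_inverse[of "a/b"] a b by simp
  then have g_ends: "g (pi/4) = pi/4 + arctan (b/a)" "g (pi/2) = pi"
    unfolding g_def by (simp_all add: cos_45 sin_45)
  have sin_pos: "sin \<phi> > 0" if "\<phi> \<in> {pi/4..pi/2}" for \<phi>
    using that pi_gt_zero by (intro sin_gt_zero) (auto simp del: pi_gt_zero)
  have "g ` {pi/4..pi/2} \<subseteq> {0..pi}"
  proof
    fix y assume "y \<in> g ` {pi/4..pi/2}"
    then obtain \<phi> where \<phi>: "\<phi> \<in> {pi/4..pi/2}" "y = g \<phi>" by auto
    have "0 \<le> cos \<phi>" using \<phi>(1) pi_gt_zero by (intro cos_ge_zero) (auto simp del: pi_gt_zero)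
    then have "0 \<le> arctan (a / b * (cos \<phi> / sin \<phi>))" using a b sin_pos[OF \<phi>(1)] by simp
    moreover have "pi/4 \<le> \<phi>" "\<phi> \<le> pi/2" using \<phi>(1) by auto
    ultimately show "y \<in> {0..pi}"
      using \<phi>(2) arctan_ubound[of "a / b * (cos \<phi> / sin \<phi>)"] pi_gt_zero
      unfolding g_def atLeastAtMost_iff by linarith
  qed
  then have "((\<lambda>\<phi>. (1 + a * b / D \<phi>) *\<^sub>R F (g \<phi>)) has_integral integral {g (pi/4)..g (pi/2)} F) {pi/4..pi/2}"
  proof (rule has_integral_substitution[where c = 0 and d = pi, rotated 2])
    show "g (pi/4) \<le> g (pi/2)" unfolding g_ends using arctan_ubound[of "b/a"] pi_gt_zero by linarith
    show "continuous_on {0..pi} F" unfolding F_def using a b by (intro continuous_on_gauss_integrand) auto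
    fix \<phi> assume "\<phi> \<in> {pi/4..pi/2}"
    then show "(g has_real_derivative 1 + a * b / D \<phi>) (at \<phi> within {pi/4..pi/2})"
      unfolding g_def[abs_def] D_def
      using has_real_derivative_arctan_scaled_cot[OF a b sin_pos] has_field_derivative_at_within by blast
  qed (use pi_gt_zero in \<open>simp del: pi_gt_zero\<close>)
  moreover have "(1 + a * b / D \<phi>) *\<^sub>R F (g \<phi>) = 2 * gauss_integrand a b \<phi>" if "\<phi> \<in> {pi/4..pi/2}" for \<phi>
  proof -
    note cs = cos_sin_arctan_scaled_cot[OF a b sin_pos[OF that], folded D_def]
    have "sqrt (D \<phi>) > 0" unfolding D_def using a b by (simp add: gauss_quadratic_form_pos)
    then show ?thesis unfolding F_def D_def real_scaleR_def
      by (intro gauss_transformation_pointwise[OF a b], fold D_def)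
        (unfold g_def cos_diff sin_diff cos_add sin_add cs, simp_all add: field_simps power2_eq_square)
  qed
  ultimately show ?thesis unfolding g_ends F_def by (subst (asm) has_integral_cong) auto
qed

lemma integral_gauss_integrand_0_pi:
  assumes "a \<noteq> 0" "b \<noteq> 0"
  shows "integral {0..pi} (gauss_integrand a b) = 2 * gauss_integral a b"
proof -
  define F where "F = gauss_integrand a b"
  have cont: "continuous_on S F" for S unfolding F_def using assms by (rule continuous_on_gauss_integrand)
  have "integral {pi/2..pi} F = integral {-pi..-(pi/2)} (\<lambda>x. F (-x))"
    using Henstock_Kurzweil_Integration.integral_reflect_real[of pi "pi/2" F] by simp
  also have "\<dots> = integral {0 + -pi..pi/2 + -pi} (\<lambda>x. F (-x))" by simp
  also have "\<dots> = integral {0..pi/2} ((\<lambda>x. F (-x)) \<circ> (\<lambda>x. x + -pi))"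
    by (rule integral_shift[symmetric]) (intro continuous_intros continuous_on_compose2[OF cont[of UNIV]]; auto)
  also have "\<dots> = integral {0..pi/2} F" by (simp add: o_def F_def gauss_integrand_def[abs_def])
  finally have "integral {pi/2..pi} F = integral {0..pi/2} F" .
  moreover have "integral {0..pi/2} F + integral {pi/2..pi} F = integral {0..pi} F"
    using integrable_continuous_interval[OF cont] pi_gt_zero
    by (intro Henstock_Kurzweil_Integration.integral_combine) (auto simp del: pi_gt_zero)
  ultimately show ?thesis unfolding gauss_integral_def F_def by simp
qed

lemma gauss_integral_arith_geom_mean:
  fixes a b :: real
  assumes a: "a > 0" and b: "b > 0"
  shows "gauss_integral a b = gauss_integral ((a + b) / 2) (sqrt (a * b))"
proof -
  define F where "F = gauss_integrand ((a + b) / 2) (sqrt (a * b))"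
  define m where "m = pi/4 + arctan (b/a)"
  have "0 < arctan (b/a)" using a b by simp
  then have m: "0 \<le> m" "m \<le> pi" unfolding m_def using arctan_ubound[of "b/a"] pi_gt_zero by linarith+
  have "((\<lambda>\<phi>. 2 * gauss_integrand a b \<phi>) has_integral integral {0..m} F + integral {m..pi} F) {0..pi/2}"
    unfolding m_def F_def using gauss_substitution_tan_part[OF a b] gauss_substitution_cot_part[OF a b]
    by (rule has_integral_combine[rotated 2]) (use pi_gt_zero in \<open>simp_all del: pi_gt_zero\<close>)
  also have "integral {0..m} F + integral {m..pi} F = integral {0..pi} F"
    unfolding F_def using m a b
    by (intro Henstock_Kurzweil_Integration.integral_combine integrable_continuous_interval continuous_on_gauss_integrand) auto
  also have "\<dots> = 2 * gauss_integral ((a + b) / 2) (sqrt (a * b))"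
    unfolding F_def using a b by (intro integral_gauss_integrand_0_pi) auto
  finally have "integral {0..pi/2} (\<lambda>\<phi>. 2 * gauss_integrand a b \<phi>)
      = 2 * gauss_integral ((a + b) / 2) (sqrt (a * b))"
    by (rule integral_unique)
  then show ?thesis unfolding gauss_integral_def by simp
qed

lemma ellipK_eq_gauss_integral:
  fixes a b :: real
  assumes b: "0 < b" and ba: "b \<le> a"
  shows "ellipK (sqrt (1 - (b / a)\<^sup>2)) = a * gauss_integral a b"
proof -
  have a: "a > 0" using b ba by linarith
  have "1 - (b / a)\<^sup>2 \<ge> 0" using a b ba by (simp add: power_le_one power_divide)
  then have "1 - (sqrt (1 - (b / a)\<^sup>2))\<^sup>2 * (sin t)\<^sup>2 = (a\<^sup>2 * (cos t)\<^sup>2 + b\<^sup>2 * (sin t)\<^sup>2) / a\<^sup>2" for t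
    using a by (simp add: cos_squared_eq power_divide field_simps)
  then have "1 / sqrt (1 - (sqrt (1 - (b / a)\<^sup>2))\<^sup>2 * (sin t)\<^sup>2) = a * gauss_integrand a b t" for t
    using a by (simp add: gauss_integrand_def real_sqrt_divide)
  then show ?thesis unfolding ellipK_def gauss_integral_def by simp
qed

section \<open>The coefficients of the period integral on \<open>(\<alpha>0, \<alpha>1)\<close>\<close>

definition period_cos_coeff :: "real \<Rightarrow> real \<Rightarrow> real \<Rightarrow> real" where
  "period_cos_coeff \<omega> c \<eta>3 = \<eta>3 * sqrt (Apoly \<omega> c \<eta>3)"

definition period_sin_coeff :: "real \<Rightarrow> real \<Rightarrow> real \<Rightarrow> real" where
  "period_sin_coeff \<omega> c \<eta>3 = (\<eta>3 - eta1 \<omega> c \<eta>3) * eta2 \<omega> c \<eta>3"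

lemma sqrt_Apoly_eq_eta2_minus_eta1:
  fixes \<omega> c \<eta>3 :: real
  shows "sqrt (Apoly \<omega> c \<eta>3) = eta2 \<omega> c \<eta>3 - eta1 \<omega> c \<eta>3"
  unfolding eta1_def eta2_def by (simp add: field_simps)

lemma eta1_plus_eta2:
  fixes \<omega> c \<eta>3 :: real
  shows "eta1 \<omega> c \<eta>3 + eta2 \<omega> c \<eta>3 = 4 * c - \<eta>3"
  unfolding eta1_def eta2_def by (simp add: field_simps)

lemma ksq_eq_one_minus_coeff_ratio:
  fixes \<omega> c \<eta>3 :: real
  assumes "period_cos_coeff \<omega> c \<eta>3 \<noteq> 0"
  shows "ksq \<omega> c \<eta>3 = 1 - period_sin_coeff \<omega> c \<eta>3 / period_cos_coeff \<omega> c \<eta>3"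
  using assms unfolding ksq_def period_cos_coeff_def period_sin_coeff_def sqrt_Apoly_eq_eta2_minus_eta1
  by (simp add: field_simps)

lemma eta_bounds:
  fixes \<omega> c e :: real
  assumes H: "\<omega> > c\<^sup>2 / 4 \<or> (\<omega> = c\<^sup>2 / 4 \<and> c > 0)"
    and e0: "alpha0 \<omega> c < e" and e1: "e < alpha1 \<omega> c"
  shows "Apoly \<omega> c e > 0" "eta1 \<omega> c e < 0" "eta2 \<omega> c e > 0" "eta2 \<omega> c e < e"
proof -
  have "c > 0 \<Longrightarrow> c\<^sup>2 / 4 > 0" by simp
  then have \<omega>: "\<omega> > 0" using H zero_le_power2[of c] by linarith
  define r where "r = sqrt (48 * \<omega> + 4 * c\<^sup>2)"
  have r: "r > 0" "r\<^sup>2 = 48 * \<omega> + 4 * c\<^sup>2" unfolding r_def using \<omega> by (auto intro: add_pos_nonneg)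
  have "\<bar>2 * c\<bar> \<le> r" unfolding r_def using \<omega>
    by (intro real_le_rsqrt) (simp add: power2_eq_square)
  then have lower: "4 * c + r < 3 * e" and "e - 2 * c < 4 * sqrt \<omega>"
    using e0 e1 unfolding alpha0_def alpha1_def r_def[symmetric] by auto
  then have "(e - 2 * c)\<^sup>2 < (4 * sqrt \<omega>)\<^sup>2"
    using \<open>\<bar>2 * c\<bar> \<le> r\<close> by (intro power_strict_mono) auto
  also have "\<dots> = 16 * \<omega>" using \<omega> by (simp add: power_mult_distrib)
  finally have A_gt: "Apoly \<omega> c e > (4 * c - e)\<^sup>2"
    using \<omega> unfolding Apoly_def by (simp add: power2_eq_square algebra_simps)
  then show A_pos: "Apoly \<omega> c e > 0" by (meson le_less_trans zero_le_power2)
  define s where "s = sqrt (Apoly \<omega> c e)"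
  have "\<bar>4 * c - e\<bar> < s" unfolding s_def using A_gt real_less_rsqrt by fastforce
  then show "eta1 \<omega> c e < 0" "eta2 \<omega> c e > 0"
    unfolding eta1_def eta2_def s_def[symmetric] by (auto simp: abs_less_iff)
  have "s\<^sup>2 < (3 * e - 4 * c)\<^sup>2"
  proof -
    have "r\<^sup>2 < (3 * e - 4 * c)\<^sup>2" using lower r by (intro power_strict_mono) auto
    then show ?thesis unfolding s_def using A_pos r(2) unfolding Apoly_def
      by (simp add: power2_eq_square algebra_simps)
  qed
  then have "s < 3 * e - 4 * c" using lower r by (smt (verit) power_mono)
  then show "eta2 \<omega> c e < e" unfolding eta2_def s_def[symmetric] by simp
qed

text \<open>\<open>p\<close>, \<open>v\<close>, \<open>x\<close> are the gaps \<open>\<eta>2 - 0\<close>, \<open>0 - \<eta>1\<close>, \<open>\<eta>3 - \<eta>2\<close> of the ordered roots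
  \<open>\<eta>1 < 0 < \<eta>2 < \<eta>3\<close> (see \<open>eta_bounds\<close>).\<close>

lemma period_coeffs_gap_coordinates:
  fixes \<omega> c e :: real
  defines "p \<equiv> eta2 \<omega> c e" and "v \<equiv> - eta1 \<omega> c e" and "x \<equiv> e - eta2 \<omega> c e"
  shows "sqrt (Apoly \<omega> c e) = p + v" "e = p + x" "4 * c = 2 * p + x - v"
    "period_cos_coeff \<omega> c e = (p + x) * (p + v)" "period_sin_coeff \<omega> c e = (p + x + v) * p"
  using sqrt_Apoly_eq_eta2_minus_eta1[of \<omega> c e] eta1_plus_eta2[of \<omega> c e]
  unfolding p_def v_def x_def period_cos_coeff_def period_sin_coeff_def by simp_all

lemma has_real_derivative_sqrt_Apoly:
  fixes \<omega> c e :: real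
  assumes "Apoly \<omega> c e > 0"
  shows "((\<lambda>e. sqrt (Apoly \<omega> c e)) has_real_derivative (4 * c - 3 * e) / sqrt (Apoly \<omega> c e)) (at e)"
proof -
  have "((\<lambda>e. Apoly \<omega> c e) has_real_derivative 8 * c - 6 * e) (at e)"
    unfolding Apoly_def by (auto intro!: derivative_eq_intros)
  from DERIV_chain2[OF DERIV_real_sqrt[OF assms] this]
  have deriv: "((\<lambda>e. sqrt (Apoly \<omega> c e)) has_real_derivative inverse (sqrt (Apoly \<omega> c e)) / 2 * (8 * c - 6 * e)) (at e)" .
  have eq: "inverse (sqrt (Apoly \<omega> c e)) / 2 * (8 * c - 6 * e) = (4 * c - 3 * e) / sqrt (Apoly \<omega> c e)"
    using assms by (simp add: field_simps)
  show ?thesis using deriv unfolding eq .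
qed

lemma has_real_derivative_period_coeffs:
  fixes \<omega> c e :: real
  assumes A_pos: "Apoly \<omega> c e > 0"
  defines "p \<equiv> eta2 \<omega> c e" and "v \<equiv> - eta1 \<omega> c e" and "x \<equiv> e - eta2 \<omega> c e"
  shows "(period_cos_coeff \<omega> c has_real_derivative ((p + v)\<^sup>2 - (p + x) * (p + 2 * x + v)) / (p + v)) (at e)"
    and "(period_sin_coeff \<omega> c has_real_derivative (p * (p - x + v) - (p + x + v)\<^sup>2) / (p + v)) (at e)"
proof -
  define S where "S e = sqrt (Apoly \<omega> c e)" for e
  have S_eq: "S e = p + v" and e_eq: "e = p + x" and c_eq: "4 * c = 2 * p + x - v"
    using period_coeffs_gap_coordinates(1-3)[where \<omega> = \<omega> and c = c and e = e]
    unfolding p_def v_def x_def S_def by simp_all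
  have S_pos: "S e > 0" unfolding S_def using A_pos by simp
  then have pv_pos: "p + v > 0" unfolding S_eq .
  have dS: "(S has_real_derivative (4 * c - 3 * e) / S e) (at e)"
    unfolding S_def[abs_def] using A_pos by (rule has_real_derivative_sqrt_Apoly)
  have "(period_cos_coeff \<omega> c has_real_derivative 1 * S e + (4 * c - 3 * e) / S e * e) (at e)"
    unfolding period_cos_coeff_def[abs_def] S_def[symmetric] by (rule DERIV_mult[OF DERIV_ident dS])
  moreover have "1 * S e + (4 * c - 3 * e) / S e * e = ((p + v)\<^sup>2 - (p + x) * (p + 2 * x + v)) / (p + v)"
    using S_pos pv_pos unfolding c_eq
    by (simp add: field_simps power2_eq_square) (unfold S_eq, unfold e_eq, simp add: algebra_simps power2_eq_square)
  ultimately show "(period_cos_coeff \<omega> c has_real_derivative ((p + v)\<^sup>2 - (p + x) * (p + 2 * x + v)) / (p + v)) (at e)"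
    by simp
  have "period_sin_coeff \<omega> c = (\<lambda>e. (3 * e - 4 * c + S e) / 2 * ((4 * c - e + S e) / 2))"
    unfolding period_sin_coeff_def eta1_def eta2_def S_def by (auto simp: field_simps)
  moreover have "((\<lambda>e. (3 * e - 4 * c + S e) / 2 * ((4 * c - e + S e) / 2)) has_real_derivative
      (3 + (4 * c - 3 * e) / S e) / 2 * ((4 * c - e + S e) / 2)
      + (3 * e - 4 * c + S e) / 2 * ((-1 + (4 * c - 3 * e) / S e) / 2)) (at e)"
    using dS by (auto intro!: derivative_eq_intros)
  moreover have "(3 + (4 * c - 3 * e) / S e) / 2 * ((4 * c - e + S e) / 2)
      + (3 * e - 4 * c + S e) / 2 * ((-1 + (4 * c - 3 * e) / S e) / 2)
      = (p * (p - x + v) - (p + x + v)\<^sup>2) / (p + v)"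
    using S_pos pv_pos unfolding c_eq
    by (simp add: field_simps power2_eq_square) (unfold S_eq, unfold e_eq, simp add: algebra_simps power2_eq_square)
  ultimately show "(period_sin_coeff \<omega> c has_real_derivative (p * (p - x + v) - (p + x + v)\<^sup>2) / (p + v)) (at e)"
    by simp
qed

lemma period_coeff_product_deriv_numerator_neg:
  fixes p x v :: real
  assumes "p > 0" "x > 0" "v > 0"
  shows "((p + v)\<^sup>2 - (p + x) * (p + 2 * x + v)) * ((p + x + v) * p)
       + ((p + x) * (p + v)) * (p * (p - x + v) - (p + x + v)\<^sup>2) < 0"
proof -
  have "((p + v)\<^sup>2 - (p + x) * (p + 2 * x + v)) * ((p + x + v) * p)
       + ((p + x) * (p + v)) * (p * (p - x + v) - (p + x + v)\<^sup>2)
      = - (x * v^3 + 2 * x^2 * v^2 + x^3 * v + 4 * p * x * v^2 + 9 * p * x^2 * v + 3 * p * x^3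
           + 9 * p^2 * x * v + 9 * p^2 * x^2 + 6 * p^3 * x)"
    by (simp add: algebra_simps power2_eq_square power3_eq_cube)
  moreover have "0 < x * v^3 + 2 * x^2 * v^2 + x^3 * v + 4 * p * x * v^2 + 9 * p * x^2 * v + 3 * p * x^3
           + 9 * p^2 * x * v + 9 * p^2 * x^2 + 6 * p^3 * x"
    using assms by (intro add_pos_pos mult_pos_pos zero_less_power) auto
  ultimately show ?thesis by linarith
qed

lemma period_coeff_deriv_numerators_sq_less:
  fixes p x v :: real
  assumes "p > 0" "x > 0" "v > 0" and N2_pos: "(p + v)\<^sup>2 - (p + x) * (p + 2 * x + v) > 0"
  shows "((p + v)\<^sup>2 - (p + x) * (p + 2 * x + v))\<^sup>2 * ((p + x + v) * p)
       < (p * (p - x + v) - (p + x + v)\<^sup>2)\<^sup>2 * ((p + x) * (p + v))"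
proof -
  define R where "R = 4 * x * v^5 + 16 * x^2 * v^4 + 24 * x^3 * v^3 + 16 * x^4 * v^2 + 4 * x^5 * v
    + 32 * p * x * v^4 + 100 * p * x^2 * v^3 + 86 * p * x^3 * v^2 + 18 * p * x^4 * v
    + 100 * p^2 * x * v^3 + 171 * p^2 * x^2 * v^2 + 63 * p^2 * x^3 * v + 120 * p^3 * x * v^2
    + 87 * p^3 * x^2 * v + 3 * p^3 * x^3 + 48 * p^4 * x * v"
  have "4 * ((p * (p - x + v) - (p + x + v)\<^sup>2)\<^sup>2 * ((p + x) * (p + v))
       - ((p + v)\<^sup>2 - (p + x) * (p + 2 * x + v))\<^sup>2 * ((p + x + v) * p))
      = ((p + v)\<^sup>2 - (p + x) * (p + 2 * x + v)) * (p * x^2 * (6 * x + 9 * p)) + R"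
    unfolding R_def
    by (simp add: algebra_simps power2_eq_square power3_eq_cube power4_eq_xxxx numeral_eq_Suc)
  moreover have "R > 0" unfolding R_def using assms by (intro add_pos_pos mult_pos_pos zero_less_power) auto
  moreover have "((p + v)\<^sup>2 - (p + x) * (p + 2 * x + v)) * (p * x^2 * (6 * x + 9 * p)) \<ge> 0"
    using assms by (intro mult_nonneg_nonneg) auto
  ultimately show ?thesis by (smt (verit))
qed

lemma sqrt_period_coeff_sum_deriv_numerator_neg:
  fixes p x v :: real
  assumes p: "p > 0" and x: "x > 0" and v: "v > 0"
  shows "((p + v)\<^sup>2 - (p + x) * (p + 2 * x + v)) / sqrt ((p + x) * (p + v))
       + (p * (p - x + v) - (p + x + v)\<^sup>2) / sqrt ((p + x + v) * p) < 0"
proof -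
  define N2 where "N2 = (p + v)\<^sup>2 - (p + x) * (p + 2 * x + v)"
  define N3 where "N3 = p * (p - x + v) - (p + x + v)\<^sup>2"
  define Q2 where "Q2 = (p + x) * (p + v)"
  define Q3 where "Q3 = (p + x + v) * p"
  have Q_pos: "Q2 > 0" "Q3 > 0" unfolding Q2_def Q3_def using assms by auto
  have "p * (p - x + v) < p * (p + x + v)" using assms by (intro mult_strict_left_mono) auto
  also have "\<dots> < (p + x + v) * (p + x + v)" using assms by (intro mult_strict_right_mono) auto
  finally have N3_neg: "N3 < 0" unfolding N3_def by (simp add: power2_eq_square)
  show ?thesis
    unfolding N2_def[symmetric] N3_def[symmetric] Q2_def[symmetric] Q3_def[symmetric]
  proof (cases "N2 \<le> 0")
    case True
    then show "N2 / sqrt Q2 + N3 / sqrt Q3 < 0"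
      using N3_neg Q_pos by (smt (verit) divide_neg_pos divide_nonpos_pos real_sqrt_gt_zero)
  next
    case False
    then have "N2\<^sup>2 * Q3 < N3\<^sup>2 * Q2"
      using period_coeff_deriv_numerators_sq_less[OF p x v] unfolding N2_def N3_def Q2_def Q3_def by simp
    then have "sqrt (N2\<^sup>2 * Q3) < sqrt (N3\<^sup>2 * Q2)" by (rule real_sqrt_less_mono)
    then have "N2 * sqrt Q3 < - N3 * sqrt Q2" using False N3_neg by (simp add: real_sqrt_mult)
    then show "N2 / sqrt Q2 + N3 / sqrt Q3 < 0" using Q_pos by (simp add: field_simps)
  qed
qed

lemma period_coeffs_bounds:
  fixes \<omega> c e :: real
  assumes H: "\<omega> > c\<^sup>2 / 4 \<or> (\<omega> = c\<^sup>2 / 4 \<and> c > 0)" and e: "e \<in> {alpha0 \<omega> c <..< alpha1 \<omega> c}"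
  shows "0 < period_sin_coeff \<omega> c e" "period_sin_coeff \<omega> c e < period_cos_coeff \<omega> c e"
proof -
  define p v x where "p = eta2 \<omega> c e" and "v = - eta1 \<omega> c e" and "x = e - eta2 \<omega> c e"
  have "p > 0" "v > 0" "x > 0" unfolding p_def v_def x_def using eta_bounds[OF H] e by auto
  moreover note coords = period_coeffs_gap_coordinates(4,5)[where \<omega> = \<omega> and c = c and e = e, folded x_def, folded p_def v_def]
  moreover have "(p + x) * (p + v) = (p + x + v) * p + x * v" by (simp add: algebra_simps)
  ultimately show "0 < period_sin_coeff \<omega> c e" "period_sin_coeff \<omega> c e < period_cos_coeff \<omega> c e"
    by (simp_all add: coords)
qed

lemma period_coeff_product_strict_antimono:
  fixes \<omega> c :: real
  assumes H: "\<omega> > c\<^sup>2 / 4 \<or> (\<omega> = c\<^sup>2 / 4 \<and> c > 0)"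
  shows "strict_antimono_on {alpha0 \<omega> c <..< alpha1 \<omega> c}
           (\<lambda>e. period_cos_coeff \<omega> c e * period_sin_coeff \<omega> c e)"
proof (rule strict_antimono_on_if_DERIV_neg)
  fix e assume "e \<in> {alpha0 \<omega> c <..< alpha1 \<omega> c}"
  then have bounds: "Apoly \<omega> c e > 0" "eta1 \<omega> c e < 0" "eta2 \<omega> c e > 0" "eta2 \<omega> c e < e"
    using eta_bounds[OF H] by auto
  define p v x where "p = eta2 \<omega> c e" and "v = - eta1 \<omega> c e" and "x = e - eta2 \<omega> c e"
  define N2 N3 where "N2 = (p + v)\<^sup>2 - (p + x) * (p + 2 * x + v)"
    and "N3 = p * (p - x + v) - (p + x + v)\<^sup>2"
  define s where "s = p + v"
  have pvx: "p > 0" "v > 0" "x > 0" unfolding p_def v_def x_def using bounds by auto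
  then have s_pos: "s > 0" unfolding s_def by simp
  note coords = period_coeffs_gap_coordinates(4,5)[where \<omega> = \<omega> and c = c and e = e, folded x_def, folded p_def v_def]
  note derivs = has_real_derivative_period_coeffs[OF bounds(1), folded x_def, folded p_def v_def, folded N2_def N3_def, folded s_def]
  have "((\<lambda>e. period_cos_coeff \<omega> c e * period_sin_coeff \<omega> c e) has_real_derivative
      N2 / s * ((p + x + v) * p) + N3 / s * ((p + x) * (p + v))) (at e)"
    using DERIV_mult[OF derivs] unfolding coords .
  moreover have "N2 / s * ((p + x + v) * p) + N3 / s * ((p + x) * (p + v))
      = (N2 * ((p + x + v) * p) + ((p + x) * (p + v)) * N3) / s"
    using s_pos by (simp add: field_simps)
  moreover have "\<dots> < 0"
    using period_coeff_product_deriv_numerator_neg[OF pvx(1,3,2), folded N2_def N3_def] s_pos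
    by (simp add: divide_neg_pos)
  ultimately show "\<exists>y. DERIV (\<lambda>e. period_cos_coeff \<omega> c e * period_sin_coeff \<omega> c e) e :> y \<and> y < 0"
    by auto
qed

lemma sqrt_period_coeff_sum_strict_antimono:
  fixes \<omega> c :: real
  assumes H: "\<omega> > c\<^sup>2 / 4 \<or> (\<omega> = c\<^sup>2 / 4 \<and> c > 0)"
  shows "strict_antimono_on {alpha0 \<omega> c <..< alpha1 \<omega> c}
           (\<lambda>e. sqrt (period_cos_coeff \<omega> c e) + sqrt (period_sin_coeff \<omega> c e))"
proof (rule strict_antimono_on_if_DERIV_neg)
  fix e assume e: "e \<in> {alpha0 \<omega> c <..< alpha1 \<omega> c}"
  then have bounds: "Apoly \<omega> c e > 0" "eta1 \<omega> c e < 0" "eta2 \<omega> c e > 0" "eta2 \<omega> c e < e"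
    using eta_bounds[OF H] by auto
  define p v x where "p = eta2 \<omega> c e" and "v = - eta1 \<omega> c e" and "x = e - eta2 \<omega> c e"
  define N2 N3 where "N2 = (p + v)\<^sup>2 - (p + x) * (p + 2 * x + v)"
    and "N3 = p * (p - x + v) - (p + x + v)\<^sup>2"
  define s where "s = p + v"
  define Q2 Q3 where "Q2 = (p + x) * (p + v)" and "Q3 = (p + x + v) * p"
  have pvx: "p > 0" "v > 0" "x > 0" unfolding p_def v_def x_def using bounds by auto
  then have s_pos: "s > 0" unfolding s_def by simp
  note coords = period_coeffs_gap_coordinates(4,5)[where \<omega> = \<omega> and c = c and e = e,
      folded x_def, folded p_def v_def, folded Q2_def Q3_def]
  note derivs = has_real_derivative_period_coeffs[OF bounds(1), folded x_def, folded p_def v_def, folded N2_def N3_def, folded s_def]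
  have Q_pos: "Q2 > 0" "Q3 > 0" using period_coeffs_bounds[OF H e] unfolding coords by auto
  have "((\<lambda>e. sqrt (period_cos_coeff \<omega> c e) + sqrt (period_sin_coeff \<omega> c e)) has_real_derivative
      inverse (sqrt Q2) / 2 * (N2 / s) + inverse (sqrt Q3) / 2 * (N3 / s)) (at e)"
    using DERIV_add[OF DERIV_chain2[OF DERIV_real_sqrt derivs(1)] DERIV_chain2[OF DERIV_real_sqrt derivs(2)]]
      Q_pos unfolding coords by simp
  moreover have "inverse (sqrt Q2) / 2 * (N2 / s) + inverse (sqrt Q3) / 2 * (N3 / s)
      = (N2 / sqrt Q2 + N3 / sqrt Q3) / (2 * s)"
    using s_pos Q_pos by (simp add: field_simps)
  moreover have "\<dots> < 0"
    using sqrt_period_coeff_sum_deriv_numerator_neg[OF pvx(1,3,2), folded N2_def N3_def Q2_def Q3_def] s_pos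
    by (simp add: divide_neg_pos)
  ultimately show "\<exists>y. DERIV (\<lambda>e. sqrt (period_cos_coeff \<omega> c e) + sqrt (period_sin_coeff \<omega> c e)) e :> y \<and> y < 0"
    by auto
qed

lemma T_psi_eq_gauss_integral:
  fixes \<omega> c e :: real
  assumes H: "\<omega> > c\<^sup>2 / 4 \<or> (\<omega> = c\<^sup>2 / 4 \<and> c > 0)" and e: "e \<in> {alpha0 \<omega> c <..< alpha1 \<omega> c}"
  shows "T_psi \<omega> c e = 8 * gauss_integral (sqrt (period_cos_coeff \<omega> c e)) (sqrt (period_sin_coeff \<omega> c e))"
proof -
  define a b where "a = sqrt (period_cos_coeff \<omega> c e)" and "b = sqrt (period_sin_coeff \<omega> c e)"
  note bounds = period_coeffs_bounds[OF H e]
  have b_pos: "0 < b" and ba: "b \<le> a" unfolding a_def b_def using bounds by auto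
  have "ksq \<omega> c e = 1 - (b / a)\<^sup>2"
    unfolding a_def b_def using bounds by (simp add: ksq_eq_one_minus_coeff_ratio power_divide)
  then have "T_psi \<omega> c e = 8 / a * ellipK (sqrt (1 - (b / a)\<^sup>2))"
    unfolding T_psi_def a_def period_cos_coeff_def by simp
  also have "\<dots> = 8 * gauss_integral a b"
    using ellipK_eq_gauss_integral[OF b_pos ba] b_pos ba by simp
  finally show ?thesis unfolding a_def b_def .
qed

theorem proposition3p7:
  fixes \<omega> c :: real
  assumes "\<omega> > c\<^sup>2 / 4 \<or> (\<omega> = c\<^sup>2 / 4 \<and> c > 0)"
  shows "(\<forall>\<eta>3 \<in> {alpha0 \<omega> c <..< alpha1 \<omega> c}. T_psi \<omega> c \<eta>3 > 0)
       \<and> strict_mono_on {alpha0 \<omega> c <..< alpha1 \<omega> c} (T_psi \<omega> c)"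
proof -
  define I where "I = {alpha0 \<omega> c <..< alpha1 \<omega> c}"
  define a b where "a e = sqrt (period_cos_coeff \<omega> c e)" and "b e = sqrt (period_sin_coeff \<omega> c e)" for e
  have ab_pos: "0 < a e" "0 < b e" if "e \<in> I" for e
    using period_coeffs_bounds[OF assms that[unfolded I_def]] unfolding a_def b_def by auto
  have T_agm: "T_psi \<omega> c e = 8 * gauss_integral ((a e + b e) / 2) (sqrt (a e * b e))" if "e \<in> I" for e
    using T_psi_eq_gauss_integral[OF assms that[unfolded I_def]] gauss_integral_arith_geom_mean ab_pos[OF that]
    unfolding a_def b_def by simp
  show ?thesis
    unfolding I_def[symmetric]
  proof (intro conjI ballI strict_mono_onI)
    fix e assume "e \<in> I"
    then show "T_psi \<omega> c e > 0"
      unfolding T_agm[OF \<open>e \<in> I\<close>] using ab_pos[OF \<open>e \<in> I\<close>]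
      by (intro mult_pos_pos gauss_integral_pos) auto
  next
    fix e1 e2 assume e: "e1 \<in> I" "e2 \<in> I" "e1 < e2"
    have "a e2 + b e2 < a e1 + b e1"
      using monotone_onD[OF sqrt_period_coeff_sum_strict_antimono[OF assms]] e unfolding a_def b_def I_def by blast
    moreover have "sqrt (a e2 * b e2) < sqrt (a e1 * b e1)"
      using monotone_onD[OF period_coeff_product_strict_antimono[OF assms]] e
      unfolding a_def b_def I_def by (simp add: real_sqrt_mult[symmetric])
    ultimately show "T_psi \<omega> c e1 < T_psi \<omega> c e2"
      using T_agm[OF e(1)] T_agm[OF e(2)] ab_pos[OF e(1)] ab_pos[OF e(2)]
      by (simp add: gauss_integral_strict_antimono)
  qed
qed

end
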